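(* Assume conditions (A1)–(A6). Let $M<\infty$. Then for each $\eta\in\mathcal N_{\mathcal P}$, $\theta\in\mathcal H_{\mathcal P}$ and $\alpha\in\mathcal H$ with $\rho_{\mathcal H}(\alpha)<M$, $$\psi_0(\theta)-\psi_0(\theta_0)=\int\dot\ell_\eta(\theta)(\alpha)(z)\,P_0(dz)+\partial^2_\theta L_0(\theta_0,\eta_0)(\alpha_0-\alpha,\theta-\theta_0)+(I_{\mathrm{lin}}+I_{\mathrm{quad}})\,O(\|\theta-\theta_0\|_{\mathcal H}^2)+O(\|\eta-\eta_0\|_{\mathcal N}\|\theta-\theta_0\|_{\mathcal H})+O(\|\eta-\eta_0\|_{\mathcal N}^2),$$ where each $O(x)$ term is bounded in absolute value by $Kx$ for a constant $K$ depending only on $M$ and the constants appearing in the conditions.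
   Context: Setting: $Z\sim P_0$ on $\mathcal Z$, $P_0$ in a convex nonparametric model $\mathcal P$; $Pf:=\int f\,dP$. $(\mathcal H,\|\cdot\|_{\mathcal H})$, $(\mathcal N,\|\cdot\|_{\mathcal N})$ are normed linear spaces and $\rho_{\mathcal H}$ is an auxiliary norm on $\mathcal H$ with values in $[0,\infty]$. For $\eta\in\mathcal N$, $\ell_\eta:\mathcal Z\times\mathcal H\to\mathbb R$ is a loss and $L_P(\theta,\eta):=E_P[\ell_\eta(Z,\theta)]$. Each $P\in\mathcal P$ has nuisance $\eta_P\in\mathcal N$ and M-estimand $\theta_P:=\arg\min_{\theta\in\mathcal H}L_P(\theta,\eta_P)$. A known $m:\mathcal Z\times\mathcal H\to\mathbb R$ defines $\psi_P(\theta):=E_P[m(Z,\theta)]$ and $\Psi(P):=\psi_P(\theta_P)$. Subscript $0$ denotes evaluation at $P_0$. $\mathcal H_{\mathcal P}:=\mathrm{conv}\{\theta_P:P\in\mathcal P\}$, $\mathcal N_{\mathcal P}:=\mathrm{conv}\{\eta_P:P\in\mathcal P\}$. $\mathcal F^*$ is the dual of a normed space $\mathcal F$; $\overline{\mathcal H}$ is the completion of $\mathcal H$ under $\|\cdot\|_{\mathcal H}$. (A1) For all $P\in\mathcal P$, $\theta_P$ exists and is unique. (A2) $\psi_0:(\mathcal H,\|\cdot\|_{\mathcal H})\to\mathbb R$ is Fréchet differentiable at every $\theta\in\mathcal H_{\mathcal P}$ with derivative $\dot\psi_0(\theta)$, and $\theta\mapsto\dot\psi_0(\theta)$ is Lipschitz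 continuous. (A3) (i) For all $\theta\in\mathcal H_{\mathcal P}$, $\eta\in\mathcal N_{\mathcal P}$ there is a continuous linear $\dot\ell_\eta(\theta):(\mathcal H,\|\cdot\|_{\mathcal H})\to L^2(P_0)$ such that for every $P\in\mathcal P$, $L_P(\cdot,\eta)$ is Fréchet differentiable at $\theta$ with $\partial_\theta L_P(\theta,\eta)(h)=P\,\dot\ell_\eta(\theta)(h)$ for all $h\in\mathcal H$. (ii) For each $\eta\in\mathcal N_{\mathcal P}$, $\theta\mapsto\partial_\theta L_0(\theta,\eta)$ from $(\mathcal H,\|\cdot\|_{\mathcal H})$ into $(\mathcal H,\rho_{\mathcal H})^*$ is Fréchet differentiable at every $\theta\in\mathcal H_{\mathcal P}$ with symmetric derivative $\partial^2_\theta L_0(\theta,\eta)(\cdot,\cdot)$. (iii) There is $C<\infty$ with $|\partial^2_\theta L_0(\theta',\eta')(h_1,h_2)-\partial^2_\theta L_0(\theta,\eta)(h_1,h_2)|\le C(\|\theta'-\theta\|_{\mathcal H}+\|\eta'-\eta\|_{\mathcal N})$ for all $\theta,\theta'\in\mathcal H_{\mathcal P}$, $\eta,\eta'\in\mathcal N_{\mathcal P}$, $h_1,h_2\in\mathcal H$ with $\|h_1\|_{\mathcal H}+\rho_{\mathcal H}(h_2)\le1$. (A4) (i) $\eta\mapsto\partial_\theta L_0(\theta_0,\eta)$ from $(\mathcal N,\|\cdot\|_{\mathcal N})$ into $(\mathcal H,\rho_{\mathcal H})^*$ is Fréchet differentiable at every $\eta\in\mathcal N_{\mathcal P}$ with derivative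 $\partial_\eta\partial_\theta L_0(\theta_0,\eta)(g,h)$. (ii) There is $C<\infty$ with $|\partial_\eta\partial_\theta L_0(\theta_0,\eta)(g,h)-\partial_\eta\partial_\theta L_0(\theta_0,\eta_0)(g,h)|\le C\|\eta-\eta_0\|_{\mathcal N}$ for all $\eta\in\mathcal N_{\mathcal P}$, $h\in\mathcal H$, $g\in\mathcal N$ with $\|g\|_{\mathcal N}+\rho_{\mathcal H}(h)\le1$. (A5) $\partial_\eta\partial_\theta L_0(\theta_0,\eta_0)(g,h)=0$ for all $(g,h)\in\mathcal N\times\mathcal H$. (A6) There are $0<\kappa_1,\kappa_2<\infty$ with $\kappa_1\|h\|_{\mathcal H}^2\le\partial^2_\theta L_0(\theta_0,\eta_0)(h,h)\le\kappa_2\|h\|_{\mathcal H}^2$ for all $h\in\mathcal H$. Hessian Riesz representer: $\alpha_0\in\overline{\mathcal H}$ is the unique element with $\dot\psi_0(\theta_0)(h)=\partial^2_\theta L_0(\theta_0,\eta_0)(\alpha_0,h)$ for all $h\in\overline{\mathcal H}$ (forms extended by continuity). $I_{\mathrm{lin}}:=0$ if $\psi_0$ is linear with $\psi_0=\dot\psi_0(\theta_0)$, and $1$ otherwise; $I_{\mathrm{quad}}:=0$ if $L_0(\theta,\eta_0)-L_0(\theta_0,\eta_0)=\partial_\theta L_0(\theta_0,\eta_0)(\theta-\theta_0)+\tfrac12\partial^2_\theta L_0(\theta_0,\eta_0)(\theta-\theta_0,\theta-\theta_0)$ for all $\theta$, and $1$ otherwise. *)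

theory Defs
  imports "HOL-Probability.Probability"
begin

definition ext_norm :: "('h::real_vector \<Rightarrow> ereal) \<Rightarrow> bool" where
  "ext_norm \<rho> \<longleftrightarrow> (\<forall>h. 0 \<le> \<rho> h) \<and> (\<forall>h. \<rho> h = 0 \<longrightarrow> h = 0)
     \<and> (\<forall>c h. \<rho> (c *\<^sub>R h) = ereal \<bar>c\<bar> * \<rho> h)
     \<and> (\<forall>h k. \<rho> (h + k) \<le> \<rho> h + \<rho> k)"

definition in_rho_dual :: "('h::real_vector \<Rightarrow> ereal) \<Rightarrow> ('h \<Rightarrow> real) \<Rightarrow> bool" where
  "in_rho_dual \<rho> f \<longleftrightarrow> linear f \<and> (\<exists>C. \<forall>h. \<rho> h \<le> 1 \<longrightarrow> \<bar>f h\<bar> \<le> C)"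

text \<open>The dual norm of a functional f is the supremum of |f h| over rho h \<le> 1.\<close>
definition frechet_dual ::
  "('h::real_vector \<Rightarrow> ereal) \<Rightarrow> ('a::real_normed_vector \<Rightarrow> 'h \<Rightarrow> real)
     \<Rightarrow> ('a \<Rightarrow> 'h \<Rightarrow> real) \<Rightarrow> 'a \<Rightarrow> bool" where
  "frechet_dual \<rho> F D x \<longleftrightarrow>
     (\<forall>y. in_rho_dual \<rho> (F y))
     \<and> (\<forall>k. linear (D k)) \<and> (\<forall>h. linear (\<lambda>k. D k h))
     \<and> (\<exists>C. \<forall>k h. \<rho> h \<le> 1 \<longrightarrow> \<bar>D k h\<bar> \<le> C * norm k)
     \<and> (\<forall>\<epsilon>>0. \<exists>\<delta>>0. \<forall>k. norm k < \<delta> \<longrightarrow>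
          (\<forall>h. \<rho> h \<le> 1 \<longrightarrow> \<bar>F (x + k) h - F x h - D k h\<bar> \<le> \<epsilon> * norm k))"

definition mix_measure :: "real \<Rightarrow> 'z measure \<Rightarrow> 'z measure \<Rightarrow> 'z measure" where
  "mix_measure t P Q = measure_of (space P) (sets P)
     (\<lambda>A. ennreal t * emeasure P A + ennreal (1 - t) * emeasure Q A)"

definition risk :: "'z measure \<Rightarrow> ('n \<Rightarrow> 'z \<Rightarrow> 'h \<Rightarrow> real) \<Rightarrow> 'h \<Rightarrow> 'n \<Rightarrow> real" where
  "risk P loss \<theta> \<eta> = (\<integral>z. loss \<eta> z \<theta> \<partial>P)"

definition psi :: "'z measure \<Rightarrow> ('z \<Rightarrow> 'h \<Rightarrow> real) \<Rightarrow> 'h \<Rightarrow> real" where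
  "psi P m \<theta> = (\<integral>z. m z \<theta> \<partial>P)"

end

(*
  Write G t e h for the score integral of ldot e t h against P0. The first-order condition
  G theta0 eta0 = 0 and the Riesz identity
    psidot theta0 (theta - theta0) = Bbar (alpha0 - iota alpha) (iota (theta - theta0))
                                     + hess theta0 eta0 (theta - theta0) alpha
  split the error into four remainders: the Taylor remainder of psi, the mixed difference
  G theta eta - G theta eta0 - G theta0 eta + G theta0 eta0, the Taylor remainder of
  G (.) eta0 at theta0, and G theta0 eta - G theta0 eta0. Each is bounded by the mean value
  theorem along a segment of the convex hulls HP and NP, using the Lipschitz bounds of (A2),
  (A3)(iii) and (A4)(ii); the last one is quadratic because the cross derivative vanishes
  at eta0 (A5), and the first and third vanish identically when psi is linear, resp. the
  risk is quadratic in theta.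
*)
theory Submission
  imports Defs
begin

lemma ext_norm_less_ereal:
  assumes "ext_norm \<rho>" "\<rho> a < ereal M"
  obtains r where "\<rho> a = ereal r" "0 \<le> r" "r < M"
proof -
  have "0 \<le> \<rho> a" using assms(1) unfolding ext_norm_def by blast
  with assms(2) show thesis using that by (cases "\<rho> a") auto
qed

lemma ext_norm_scaleR:
  assumes "ext_norm \<rho>" "\<rho> a = ereal r" "0 \<le> c"
  shows "\<rho> (c *\<^sub>R a) = ereal (c * r)"
  using assms unfolding ext_norm_def by auto

lemma bilinear_diff:
  assumes "bilinear B1" "bilinear B2"
  shows "bilinear (\<lambda>x y. B1 x y - B2 x y)"
  using assms unfolding bilinear_def by (auto intro: linear_compose_sub)

lemma frechet_dual_linear: "frechet_dual \<rho> F D x \<Longrightarrow> linear (F y)"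
  unfolding frechet_dual_def in_rho_dual_def by blast

lemma frechet_dual_bilinear: "frechet_dual \<rho> F D x \<Longrightarrow> bilinear D"
  unfolding frechet_dual_def bilinear_def by simp

text \<open>Scaling \<open>d\<close> to norm \<open>1/2\<close> and \<open>a\<close> to \<open>\<rho> < 1/2\<close> lands in the unit ball of
  \<open>norm k + \<rho> h \<le> 1\<close>; this is where the factor \<open>4 * M\<close> of the theorem comes from.\<close>
lemma bilinear_bound_ext_norm:
  fixes B :: "'a::real_normed_vector \<Rightarrow> 'h::real_vector \<Rightarrow> real"
  assumes \<rho>: "ext_norm \<rho>" and B: "bilinear B"
    and bound: "\<And>k h. ereal (norm k) + \<rho> h \<le> 1 \<Longrightarrow> \<bar>B k h\<bar> \<le> c"
    and a: "\<rho> a < ereal M"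
  shows "\<bar>B d a\<bar> \<le> 4 * M * c * norm d"
proof (cases "d = 0")
  case True
  then show ?thesis using bilinear_lzero[OF B] by simp
next
  case False
  obtain r where r: "\<rho> a = ereal r" "0 \<le> r" "r < M"
    using ext_norm_less_ereal[OF \<rho> a] .
  define k where "k = (1 / (2 * norm d)) *\<^sub>R d"
  define h where "h = (1 / (2 * M)) *\<^sub>R a"
  have "norm k = 1/2" unfolding k_def using False by simp
  moreover have "\<rho> h = ereal (r / (2 * M))"
    unfolding h_def using ext_norm_scaleR[OF \<rho> r(1)] r by simp
  moreover have "r / (2 * M) \<le> 1/2" using r by (simp add: field_simps)
  ultimately have "ereal (norm k) + \<rho> h \<le> 1" by (simp add: one_ereal_def)
  then have c: "\<bar>B k h\<bar> \<le> c" by (rule bound)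
  have "B d a = B ((2 * norm d) *\<^sub>R k) ((2 * M) *\<^sub>R h)"
    unfolding k_def h_def using False r by simp
  also have "\<dots> = (2 * norm d) * (2 * M) * B k h"
    by (simp add: bilinear_lmul[OF B] bilinear_rmul[OF B])
  finally have "\<bar>B d a\<bar> = (2 * norm d) * (2 * M) * \<bar>B k h\<bar>"
    using r by (simp add: abs_mult)
  also have "\<dots> \<le> (2 * norm d) * (2 * M) * c"
    using c r by (intro mult_left_mono) auto
  finally show ?thesis by (simp add: algebra_simps)
qed

lemma frechet_dual_has_derivative_unit_ball:
  assumes fd: "frechet_dual \<rho> F D x" and h: "\<rho> h \<le> 1"
  shows "((\<lambda>y. F y h) has_derivative (\<lambda>k. D k h)) (at x)"
  unfolding has_derivative_at_alt
proof
  obtain C where C: "\<And>k. \<bar>D k h\<bar> \<le> C * norm k"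
    using fd h unfolding frechet_dual_def by blast
  have "linear (\<lambda>k. D k h)" using fd unfolding frechet_dual_def by blast
  then show "bounded_linear (\<lambda>k. D k h)"
    using C by (intro bounded_linear_intro[where K = C]) (auto simp: linear_iff mult.commute)
  show "\<forall>\<epsilon>>0. \<exists>\<delta>>0. \<forall>y. norm (y - x) < \<delta> \<longrightarrow>
          norm (F y h - F x h - D (y - x) h) \<le> \<epsilon> * norm (y - x)"
  proof (intro allI impI)
    fix \<epsilon> :: real assume "\<epsilon> > 0"
    then obtain \<delta> where "\<delta> > 0" and "\<And>k. norm k < \<delta> \<Longrightarrow>
        \<bar>F (x + k) h - F x h - D k h\<bar> \<le> \<epsilon> * norm k"
      using fd h unfolding frechet_dual_def by meson
    then show "\<exists>\<delta>>0. \<forall>y. norm (y - x) < \<delta> \<longrightarrow>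
          norm (F y h - F x h - D (y - x) h) \<le> \<epsilon> * norm (y - x)"
      by (metis add.commute diff_add_cancel real_norm_def)
  qed
qed

lemma frechet_dual_has_derivative:
  assumes \<rho>: "ext_norm \<rho>" and fd: "frechet_dual \<rho> F D x" and h: "\<rho> h < \<infinity>"
  shows "((\<lambda>y. F y h) has_derivative (\<lambda>k. D k h)) (at x)"
proof -
  have "0 \<le> \<rho> h" using \<rho> unfolding ext_norm_def by blast
  with h obtain r where r: "\<rho> h = ereal r" "0 \<le> r" by (cases "\<rho> h") auto
  define c where "c = r + 1"
  have "\<rho> ((1 / c) *\<^sub>R h) = ereal (r / c)"
    using ext_norm_scaleR[OF \<rho> r(1)] r unfolding c_def by simp
  then have "\<rho> ((1 / c) *\<^sub>R h) \<le> 1" using r unfolding c_def by (simp add: one_ereal_def)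
  from has_derivative_mult_right[OF frechet_dual_has_derivative_unit_ball[OF fd this], of c]
  have "((\<lambda>y. c * F y ((1 / c) *\<^sub>R h)) has_derivative (\<lambda>k. c * D k ((1 / c) *\<^sub>R h))) (at x)" .
  moreover have "bilinear D" using frechet_dual_bilinear[OF fd] .
  ultimately show ?thesis
    using r unfolding c_def
    by (simp add: linear_scale[OF frechet_dual_linear[OF fd]] bilinear_rmul)
qed

lemma has_derivative_along_line:
  fixes f :: "'a::real_normed_vector \<Rightarrow> real"
  assumes "(f has_derivative f') (at (x + t *\<^sub>R d))"
  shows "((\<lambda>s. f (x + s *\<^sub>R d)) has_real_derivative f' d) (at t)"
proof -
  have "((\<lambda>s. x + s *\<^sub>R d) has_derivative (\<lambda>s. s *\<^sub>R d)) (at t)"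
    by (auto intro!: derivative_eq_intros)
  from has_derivative_compose[OF this assms]
  have "((\<lambda>s. f (x + s *\<^sub>R d)) has_derivative (\<lambda>s. f' (s *\<^sub>R d))) (at t)" .
  moreover have "(\<lambda>s. f' (s *\<^sub>R d)) = (*) (f' d)"
    using has_derivative_linear[OF assms] by (auto simp: linear_scale)
  ultimately show ?thesis unfolding has_field_derivative_def by simp
qed

lemma frechet_dual_line_derivative:
  assumes "ext_norm \<rho>" "frechet_dual \<rho> F D (x + t *\<^sub>R d)" "\<rho> a < \<infinity>"
  shows "((\<lambda>s. F (x + s *\<^sub>R d) a) has_real_derivative D d a) (at t)"
  using has_derivative_along_line[OF frechet_dual_has_derivative[OF assms]] .

lemma MVT_remainder_bound:
  fixes g :: "real \<Rightarrow> real"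
  assumes "\<And>t. t \<in> {0..1} \<Longrightarrow> (g has_real_derivative g' t) (at t)"
    and "\<And>t. t \<in> {0..1} \<Longrightarrow> \<bar>g' t - c\<bar> \<le> B"
  shows "\<bar>g 1 - g 0 - c\<bar> \<le> B"
proof -
  obtain \<xi> where "0 < \<xi>" "\<xi> < 1" "g 1 - g 0 = (1 - 0) * g' \<xi>"
    using MVT2[of 0 1 g g'] assms(1) by auto
  then show ?thesis using assms(2)[of \<xi>] by simp
qed

lemma convex_line_mem:
  assumes "convex S" "x0 \<in> S" "x \<in> S" "t \<in> {0..1}"
  shows "x0 + t *\<^sub>R (x - x0) \<in> S"
proof -
  have "x0 + t *\<^sub>R (x - x0) = (1 - t) *\<^sub>R x0 + t *\<^sub>R x" by (simp add: algebra_simps)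
  then show ?thesis using convexD_alt[OF assms(1-3)] assms(4) by simp
qed

lemma segment_remainder_bound:
  fixes D :: "real \<Rightarrow> 'a::real_normed_vector \<Rightarrow> 'h::real_vector \<Rightarrow> real"
  assumes \<rho>: "ext_norm \<rho>" and a: "\<rho> a < ereal M"
    and deriv: "\<And>t. t \<in> {0..1} \<Longrightarrow> (g has_real_derivative D t d a) (at t)"
    and D: "\<And>t. t \<in> {0..1} \<Longrightarrow> bilinear (D t)" and B: "bilinear B"
    and close: "\<And>t k h. t \<in> {0..1} \<Longrightarrow> ereal (norm k) + \<rho> h \<le> 1 \<Longrightarrow> \<bar>D t k h - B k h\<bar> \<le> c"
  shows "\<bar>g 1 - g 0 - B d a\<bar> \<le> 4 * M * c * norm d"
proof (rule MVT_remainder_bound[OF deriv])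
  fix t :: real assume "t \<in> {0..1}"
  then show "\<bar>D t d a - B d a\<bar> \<le> 4 * M * c * norm d"
    using bilinear_bound_ext_norm[OF \<rho> bilinear_diff[OF D B] close a] by blast
qed

lemma frechet_dual_taylor_bound:
  fixes F :: "'a::real_normed_vector \<Rightarrow> 'h::real_vector \<Rightarrow> real"
  assumes \<rho>: "ext_norm \<rho>" and S: "convex S" "x0 \<in> S" "x \<in> S"
    and fd: "\<And>y. y \<in> S \<Longrightarrow> frechet_dual \<rho> F (D y) y"
    and lip: "\<And>y k h. y \<in> S \<Longrightarrow> ereal (norm k) + \<rho> h \<le> 1 \<Longrightarrow>
                 \<bar>D y k h - D x0 k h\<bar> \<le> C * norm (y - x0)"
    and C: "0 \<le> C" and a: "\<rho> a < ereal M"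
  shows "\<bar>F x a - F x0 a - D x0 (x - x0) a\<bar> \<le> 4 * M * C * (norm (x - x0))\<^sup>2"
proof -
  let ?y = "\<lambda>t. x0 + t *\<^sub>R (x - x0)"
  have y: "?y t \<in> S" if "t \<in> {0..1}" for t
    using convex_line_mem[OF S that] .
  have a_fin: "\<rho> a < \<infinity>" using a by (cases "\<rho> a") auto
  have "\<bar>F (?y 1) a - F (?y 0) a - D x0 (x - x0) a\<bar> \<le> 4 * M * (C * norm (x - x0)) * norm (x - x0)"
  proof (rule segment_remainder_bound[OF \<rho> a, where D = "\<lambda>t. D (?y t)"])
    show "((\<lambda>s. F (?y s) a) has_real_derivative D (?y t) (x - x0) a) (at t)" if "t \<in> {0..1}" for t
      using frechet_dual_line_derivative[OF \<rho> fd[OF y[OF that]] a_fin] by simp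
    show "bilinear (D (?y t))" if "t \<in> {0..1}" for t
      using frechet_dual_bilinear[OF fd[OF y[OF that]]] .
    show "bilinear (D x0)" using frechet_dual_bilinear[OF fd[OF S(2)]] .
    fix t :: real and k :: 'a and h :: 'h assume t: "t \<in> {0..1}" and kh: "ereal (norm k) + \<rho> h \<le> 1"
    have "norm (?y t - x0) \<le> norm (x - x0)"
      using t by (simp add: mult_left_le_one_le)
    then show "\<bar>D (?y t) k h - D x0 k h\<bar> \<le> C * norm (x - x0)"
      using lip[OF y[OF t] kh] C by (meson mult_left_mono order_trans)
  qed
  then show ?thesis by (simp add: power2_eq_square mult.assoc)
qed

lemma frechet_dual_mixed_bound:
  fixes F1 F2 :: "'a::real_normed_vector \<Rightarrow> 'h::real_vector \<Rightarrow> real"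
  assumes \<rho>: "ext_norm \<rho>" and S: "convex S" "x0 \<in> S" "x \<in> S"
    and fd1: "\<And>y. y \<in> S \<Longrightarrow> frechet_dual \<rho> F1 (D1 y) y"
    and fd2: "\<And>y. y \<in> S \<Longrightarrow> frechet_dual \<rho> F2 (D2 y) y"
    and close: "\<And>y k h. y \<in> S \<Longrightarrow> ereal (norm k) + \<rho> h \<le> 1 \<Longrightarrow> \<bar>D1 y k h - D2 y k h\<bar> \<le> c"
    and a: "\<rho> a < ereal M"
  shows "\<bar>(F1 x a - F2 x a) - (F1 x0 a - F2 x0 a)\<bar> \<le> 4 * M * c * norm (x - x0)"
proof -
  let ?y = "\<lambda>t. x0 + t *\<^sub>R (x - x0)"
  have y: "?y t \<in> S" if "t \<in> {0..1}" for t
    using convex_line_mem[OF S that] .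
  have a_fin: "\<rho> a < \<infinity>" using a by (cases "\<rho> a") auto
  have "\<bar>(F1 (?y 1) a - F2 (?y 1) a) - (F1 (?y 0) a - F2 (?y 0) a) - (\<lambda>k h. 0) (x - x0) a\<bar>
        \<le> 4 * M * c * norm (x - x0)"
  proof (rule segment_remainder_bound[OF \<rho> a,
      where D = "\<lambda>t k h. D1 (?y t) k h - D2 (?y t) k h" and B = "\<lambda>k h. 0"])
    show "((\<lambda>s. F1 (?y s) a - F2 (?y s) a) has_real_derivative
            D1 (?y t) (x - x0) a - D2 (?y t) (x - x0) a) (at t)" if "t \<in> {0..1}" for t
      using DERIV_diff[OF frechet_dual_line_derivative[OF \<rho> fd1[OF y[OF that]] a_fin]
                          frechet_dual_line_derivative[OF \<rho> fd2[OF y[OF that]] a_fin]]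
      by simp
    show "bilinear (\<lambda>k h. D1 (?y t) k h - D2 (?y t) k h)" if "t \<in> {0..1}" for t
      using bilinear_diff[OF frechet_dual_bilinear[OF fd1] frechet_dual_bilinear[OF fd2]] y[OF that]
      by blast
    show "bilinear (\<lambda>k h. 0 :: real)" by (simp add: bilinear_def linear_zero)
    show "\<bar>D1 (?y t) k h - D2 (?y t) k h - 0\<bar> \<le> c"
      if "t \<in> {0..1}" "ereal (norm k) + \<rho> h \<le> 1" for t k h
      using close[OF y that(2)] that(1) by simp
  qed
  then show ?thesis by simp
qed

lemma lipschitz_derivative_taylor_bound:
  fixes f :: "'a::real_normed_vector \<Rightarrow> real"
  assumes S: "convex S" "x0 \<in> S" "x \<in> S"
    and deriv: "\<And>y. y \<in> S \<Longrightarrow> (f has_derivative f' y) (at y)"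
    and lip: "\<And>y. y \<in> S \<Longrightarrow> onorm (\<lambda>h. f' y h - f' x0 h) \<le> C * norm (y - x0)"
    and C: "0 \<le> C"
  shows "\<bar>f x - f x0 - f' x0 (x - x0)\<bar> \<le> C * (norm (x - x0))\<^sup>2"
proof -
  let ?d = "x - x0" and ?y = "\<lambda>t. x0 + t *\<^sub>R (x - x0)"
  have y: "?y t \<in> S" if "t \<in> {0..1}" for t
    using convex_line_mem[OF S that] .
  have "\<bar>f (?y 1) - f (?y 0) - f' x0 ?d\<bar> \<le> C * norm ?d * norm ?d"
  proof (rule MVT_remainder_bound)
    show "((\<lambda>s. f (?y s)) has_real_derivative f' (?y t) ?d) (at t)" if "t \<in> {0..1}" for t
      using has_derivative_along_line[OF deriv[OF y[OF that]]] .
    fix t :: real assume t: "t \<in> {0..1}"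
    have "bounded_linear (\<lambda>h. f' (?y t) h - f' x0 h)"
      using deriv[OF y[OF t]] deriv[OF S(2)]
      by (intro bounded_linear_sub) (auto dest: has_derivative_bounded_linear)
    then have "\<bar>f' (?y t) ?d - f' x0 ?d\<bar> \<le> onorm (\<lambda>h. f' (?y t) h - f' x0 h) * norm ?d"
      using onorm by force
    also have "\<dots> \<le> C * norm (?y t - x0) * norm ?d"
      using lip[OF y[OF t]] by (intro mult_right_mono) auto
    also have "\<dots> \<le> C * norm ?d * norm ?d"
      using t C by (intro mult_right_mono mult_left_mono) (auto simp: mult_left_le_one_le)
    finally show "\<bar>f' (?y t) ?d - f' x0 ?d\<bar> \<le> C * norm ?d * norm ?d" .
  qed
  then show ?thesis by (simp add: power2_eq_square mult.assoc)
qed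

lemma quadratic_directional_derivative:
  fixes f :: "'a::real_normed_vector \<Rightarrow> real"
  assumes quad: "\<And>y. f y - f x0 = l (y - x0) + 1/2 * B (y - x0) (y - x0)"
    and l: "linear l" and B: "bilinear B" and sym: "\<And>h k. B h k = B k h"
    and deriv: "(f has_derivative f') (at x)"
  shows "f' a = l a + B (x - x0) a"
proof -
  let ?d = "x - x0"
  have line: "f (x + s *\<^sub>R a) = f x0 + l ?d + s * l a
                + 1/2 * (B ?d ?d + 2 * s * B ?d a + s\<^sup>2 * B a a)" for s
  proof -
    have shift: "x + s *\<^sub>R a - x0 = ?d + s *\<^sub>R a" by simp
    have "l (?d + s *\<^sub>R a) = l ?d + s * l a"
      by (simp add: linear_add[OF l] linear_scale[OF l])
    moreover have "B (?d + s *\<^sub>R a) (?d + s *\<^sub>R a) = B ?d ?d + 2 * s * B ?d a + s\<^sup>2 * B a a"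
      using sym[of a ?d]
      unfolding bilinear_ladd[OF B] bilinear_radd[OF B] bilinear_lmul[OF B] bilinear_rmul[OF B]
      by (simp add: power2_eq_square algebra_simps)
    ultimately show ?thesis using quad[of "x + s *\<^sub>R a"] unfolding shift by simp
  qed
  have "((\<lambda>s. f (x + s *\<^sub>R a)) has_real_derivative l a + B ?d a) (at 0)"
    unfolding line by (auto intro!: derivative_eq_intros)
  moreover have "((\<lambda>s. f (x + s *\<^sub>R a)) has_real_derivative f' a) (at 0)"
    using has_derivative_along_line[of f f' x 0 a] deriv by simp
  ultimately show ?thesis using DERIV_unique by metis
qed

theorem theorem1:
  fixes Pset :: "'z measure set" and P0 :: "'z measure"
    and theta_of :: "'z measure \<Rightarrow> 'h::real_normed_vector"
    and eta_of :: "'z measure \<Rightarrow> 'n::real_normed_vector"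
    and loss :: "'n \<Rightarrow> 'z \<Rightarrow> 'h \<Rightarrow> real"
    and m :: "'z \<Rightarrow> 'h \<Rightarrow> real"
    and \<rho> :: "'h \<Rightarrow> ereal"
    and ldot :: "'n \<Rightarrow> 'h \<Rightarrow> 'h \<Rightarrow> 'z \<Rightarrow> real"
    and psidot :: "'h \<Rightarrow> 'h \<Rightarrow> real"
    and hess :: "'h \<Rightarrow> 'n \<Rightarrow> 'h \<Rightarrow> 'h \<Rightarrow> real"
    and cross :: "'n \<Rightarrow> 'n \<Rightarrow> 'h \<Rightarrow> real"
    and \<iota> :: "'h \<Rightarrow> 'hb::banach"
    and Bbar :: "'hb \<Rightarrow> 'hb \<Rightarrow> real"
    and psidot_bar :: "'hb \<Rightarrow> real"
    and alpha0 :: "'hb"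
    and M :: real
  defines "theta0 \<equiv> theta_of P0"
    and "eta0 \<equiv> eta_of P0"
    and "HP \<equiv> convex hull (theta_of ` Pset)"
    and "NP \<equiv> convex hull (eta_of ` Pset)"
    and "Ilin \<equiv> (if psi P0 m = psidot (theta_of P0) then 0 else 1 :: real)"
    and "Iquad \<equiv> (if (\<forall>\<theta>. risk P0 loss \<theta> (eta_of P0) - risk P0 loss (theta_of P0) (eta_of P0)
                         = (\<integral>z. ldot (eta_of P0) (theta_of P0) (\<theta> - theta_of P0) z \<partial>P0)
                           + 1/2 * hess (theta_of P0) (eta_of P0) (\<theta> - theta_of P0) (\<theta> - theta_of P0))
                  then 0 else 1 :: real)"
  assumes \<comment> \<open>setting: convex model of probability measures on a common measurable space\<close>
    model_prob: "\<forall>P\<in>Pset. prob_space P \<and> sets P = sets P0 \<and> space P = space P0"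
    and P0_in: "P0 \<in> Pset"
    and model_convex: "\<forall>P\<in>Pset. \<forall>Q\<in>Pset. \<forall>t\<in>{0..1}. mix_measure t P Q \<in> Pset"
    and rho_norm: "ext_norm \<rho>"
    \<comment> \<open>(A1): theta_P is the unique minimiser of L_P(., eta_P)\<close>
    and A1: "\<forall>P\<in>Pset. \<forall>\<theta>. \<theta> \<noteq> theta_of P \<longrightarrow>
                risk P loss (theta_of P) (eta_of P) < risk P loss \<theta> (eta_of P)"
    \<comment> \<open>(A2)\<close>
    and A2_diff: "\<forall>\<theta>\<in>HP. (psi P0 m has_derivative psidot \<theta>) (at \<theta>)"
    and A2_lip: "\<exists>C. \<forall>\<theta>\<in>HP. \<forall>\<theta>'\<in>HP.
                   onorm (\<lambda>h. psidot \<theta>' h - psidot \<theta> h) \<le> C * norm (\<theta>' - \<theta>)"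
    \<comment> \<open>(A3)(i): ldot eta theta is a continuous linear map into L2(P0) and gives the derivative\<close>
    and A3_i_L2: "\<forall>\<theta>\<in>HP. \<forall>\<eta>\<in>NP.
         (\<forall>h. ldot \<eta> \<theta> h \<in> borel_measurable P0 \<and> integrable P0 (\<lambda>z. (ldot \<eta> \<theta> h z)\<^sup>2))
       \<and> (\<forall>a b h1 h2. AE z in P0. ldot \<eta> \<theta> (a *\<^sub>R h1 + b *\<^sub>R h2) z
                                  = a * ldot \<eta> \<theta> h1 z + b * ldot \<eta> \<theta> h2 z)
       \<and> (\<exists>C. \<forall>h. sqrt (\<integral>z. (ldot \<eta> \<theta> h z)\<^sup>2 \<partial>P0) \<le> C * norm h)"
    and A3_i_deriv: "\<forall>\<theta>\<in>HP. \<forall>\<eta>\<in>NP. \<forall>P\<in>Pset.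
         ((\<lambda>t. risk P loss t \<eta>) has_derivative (\<lambda>h. \<integral>z. ldot \<eta> \<theta> h z \<partial>P)) (at \<theta>)"
    \<comment> \<open>(A3)(ii)\<close>
    and A3_ii: "\<forall>\<eta>\<in>NP. \<forall>\<theta>\<in>HP.
         frechet_dual \<rho> (\<lambda>t h. \<integral>z. ldot \<eta> t h z \<partial>P0) (hess \<theta> \<eta>) \<theta>
       \<and> (\<forall>h1 h2. hess \<theta> \<eta> h1 h2 = hess \<theta> \<eta> h2 h1)"
    \<comment> \<open>(A3)(iii)\<close>
    and A3_iii: "\<exists>C. \<forall>\<theta>\<in>HP. \<forall>\<theta>'\<in>HP. \<forall>\<eta>\<in>NP. \<forall>\<eta>'\<in>NP. \<forall>h1 h2.
         ereal (norm h1) + \<rho> h2 \<le> 1 \<longrightarrow>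
         \<bar>hess \<theta>' \<eta>' h1 h2 - hess \<theta> \<eta> h1 h2\<bar> \<le> C * (norm (\<theta>' - \<theta>) + norm (\<eta>' - \<eta>))"
    \<comment> \<open>(A4)(i)\<close>
    and A4_i: "\<forall>\<eta>\<in>NP. frechet_dual \<rho> (\<lambda>e h. \<integral>z. ldot e theta0 h z \<partial>P0) (cross \<eta>) \<eta>"
    \<comment> \<open>(A4)(ii)\<close>
    and A4_ii: "\<exists>C. \<forall>\<eta>\<in>NP. \<forall>g h. ereal (norm g) + \<rho> h \<le> 1 \<longrightarrow>
         \<bar>cross \<eta> g h - cross eta0 g h\<bar> \<le> C * norm (\<eta> - eta0)"
    \<comment> \<open>(A5)\<close>
    and A5: "\<forall>g h. cross eta0 g h = 0"
    \<comment> \<open>(A6)\<close>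
    and A6: "\<exists>\<kappa>1 \<kappa>2. 0 < \<kappa>1 \<and> 0 < \<kappa>2 \<and>
         (\<forall>h. \<kappa>1 * (norm h)\<^sup>2 \<le> hess theta0 eta0 h h \<and> hess theta0 eta0 h h \<le> \<kappa>2 * (norm h)\<^sup>2)"
    \<comment> \<open>completion of H: iota is an isometric linear embedding with dense range\<close>
    and compl_lin: "linear \<iota>"
    and compl_iso: "\<forall>h. norm (\<iota> h) = norm h"
    and compl_dense: "closure (range \<iota>) = UNIV"
    \<comment> \<open>continuous extensions of the Hessian form and of psidot at theta0\<close>
    and Bbar_ext: "bounded_bilinear Bbar \<and> (\<forall>x y. Bbar (\<iota> x) (\<iota> y) = hess theta0 eta0 x y)"
    and psidot_bar_ext: "bounded_linear psidot_bar \<and> (\<forall>h. psidot_bar (\<iota> h) = psidot theta0 h)"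
    \<comment> \<open>Hessian Riesz representer\<close>
    and alpha0_riesz: "\<forall>h. psidot_bar h = Bbar alpha0 h"
  shows "\<exists>K. \<forall>\<eta>\<in>NP. \<forall>\<theta>\<in>HP. \<forall>\<alpha>. \<rho> \<alpha> < ereal M \<longrightarrow>
           \<bar>psi P0 m \<theta> - psi P0 m theta0
              - (\<integral>z. ldot \<eta> \<theta> \<alpha> z \<partial>P0)
              - Bbar (alpha0 - \<iota> \<alpha>) (\<iota> (\<theta> - theta0))\<bar>
           \<le> K * ((Ilin + Iquad) * (norm (\<theta> - theta0))\<^sup>2
                  + norm (\<eta> - eta0) * norm (\<theta> - theta0)
                  + (norm (\<eta> - eta0))\<^sup>2)"
proof -
  let ?G = "\<lambda>t e h. \<integral>z. ldot e t h z \<partial>P0"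
  have th0: "theta0 \<in> HP" and et0: "eta0 \<in> NP" and cvx: "convex HP" "convex NP"
    unfolding HP_def NP_def theta0_def eta0_def using P0_in by (auto simp: hull_inc)
  obtain Cp where Cp: "\<forall>\<theta>\<in>HP. \<forall>\<theta>'\<in>HP. onorm (\<lambda>h. psidot \<theta>' h - psidot \<theta> h) \<le> Cp * norm (\<theta>' - \<theta>)"
    using A2_lip by blast
  obtain C3 where C3: "\<forall>\<theta>\<in>HP. \<forall>\<theta>'\<in>HP. \<forall>\<eta>\<in>NP. \<forall>\<eta>'\<in>NP. \<forall>h1 h2.
      ereal (norm h1) + \<rho> h2 \<le> 1 \<longrightarrow>
      \<bar>hess \<theta>' \<eta>' h1 h2 - hess \<theta> \<eta> h1 h2\<bar> \<le> C3 * (norm (\<theta>' - \<theta>) + norm (\<eta>' - \<eta>))"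
    using A3_iii by blast
  obtain C4 where C4: "\<forall>\<eta>\<in>NP. \<forall>g h. ereal (norm g) + \<rho> h \<le> 1 \<longrightarrow>
      \<bar>cross \<eta> g h - cross eta0 g h\<bar> \<le> C4 * norm (\<eta> - eta0)"
    using A4_ii by blast
  define C where "C = max 0 (max Cp (max C3 C4))"
  have C: "0 \<le> C" "Cp \<le> C" "C3 \<le> C" "C4 \<le> C" unfolding C_def by auto
  have psi_lip: "onorm (\<lambda>h. psidot \<theta> h - psidot theta0 h) \<le> C * norm (\<theta> - theta0)"
    if "\<theta> \<in> HP" for \<theta>
    using Cp that th0 C(2) by (meson mult_right_mono norm_ge_zero order_trans)
  have hess_lip: "\<bar>hess \<theta>' \<eta>' k h - hess \<theta> \<eta> k h\<bar> \<le> C * (norm (\<theta>' - \<theta>) + norm (\<eta>' - \<eta>))"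
    if "\<theta> \<in> HP" "\<theta>' \<in> HP" "\<eta> \<in> NP" "\<eta>' \<in> NP" "ereal (norm k) + \<rho> h \<le> 1" for \<theta> \<theta>' \<eta> \<eta>' k h
    using C3 that C(3) by (meson add_nonneg_nonneg mult_right_mono norm_ge_zero order_trans)
  have cross_lip: "\<bar>cross \<eta> k h - cross eta0 k h\<bar> \<le> C * norm (\<eta> - eta0)"
    if "\<eta> \<in> NP" "ereal (norm k) + \<rho> h \<le> 1" for \<eta> k h
    using C4 that C(4) by (meson mult_right_mono norm_ge_zero order_trans)
  have fd_hess: "frechet_dual \<rho> (\<lambda>t. ?G t \<eta>) (hess \<theta> \<eta>) \<theta>" if "\<theta> \<in> HP" "\<eta> \<in> NP" for \<theta> \<eta>
    using A3_ii that by blast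
  have foc: "?G theta0 eta0 = (\<lambda>h. 0)"
  proof (rule has_derivative_local_min)
    show "((\<lambda>t. risk P0 loss t eta0) has_derivative ?G theta0 eta0) (at theta0)"
      using A3_i_deriv th0 et0 P0_in by blast
    have "risk P0 loss theta0 eta0 \<le> risk P0 loss t eta0" for t
      using A1 P0_in unfolding theta0_def eta0_def by (cases "t = theta_of P0") (auto intro: less_imp_le)
    then show "eventually (\<lambda>t. risk P0 loss theta0 eta0 \<le> risk P0 loss t eta0) (at theta0)"
      by (simp add: always_eventually)
  qed
  define K where "K = (1 + 4 * \<bar>M\<bar>) * C"
  show ?thesis
  proof (intro exI[of _ K] ballI allI impI)
    fix \<eta> \<theta> \<alpha> assume \<eta>: "\<eta> \<in> NP" and \<theta>: "\<theta> \<in> HP" and \<alpha>: "\<rho> \<alpha> < ereal M"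
    have "M > 0" using ext_norm_less_ereal[OF rho_norm \<alpha>] by force
    let ?d = "\<theta> - theta0" and ?e = "\<eta> - eta0"
    have riesz: "psidot theta0 ?d = Bbar (alpha0 - \<iota> \<alpha>) (\<iota> ?d) + hess theta0 eta0 ?d \<alpha>"
    proof -
      have "psidot theta0 ?d = Bbar alpha0 (\<iota> ?d)" using psidot_bar_ext alpha0_riesz by metis
      also have "\<dots> = Bbar (alpha0 - \<iota> \<alpha>) (\<iota> ?d) + Bbar (\<iota> \<alpha>) (\<iota> ?d)"
        using bounded_bilinear.diff_left Bbar_ext by fastforce
      finally show ?thesis using Bbar_ext A3_ii th0 et0 by metis
    qed
    have lin_term: "\<bar>psi P0 m \<theta> - psi P0 m theta0 - psidot theta0 ?d\<bar> \<le> Ilin * C * (norm ?d)\<^sup>2"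
    proof (cases "psi P0 m = psidot theta0")
      case True
      have "linear (psidot theta0)"
        using A2_diff th0 has_derivative_linear by blast
      then show ?thesis using True C unfolding Ilin_def theta0_def by (simp add: linear_diff)
    next
      case False
      then have "Ilin = 1" unfolding Ilin_def theta0_def by simp
      then show ?thesis
        using lipschitz_derivative_taylor_bound[OF cvx(1) th0 \<theta> _ psi_lip C(1)] A2_diff by simp
    qed
    have mixed_term: "\<bar>(?G \<theta> \<eta> \<alpha> - ?G \<theta> eta0 \<alpha>) - (?G theta0 \<eta> \<alpha> - ?G theta0 eta0 \<alpha>)\<bar>
        \<le> 4 * M * (C * norm ?e) * norm ?d"
    proof (rule frechet_dual_mixed_bound[OF rho_norm cvx(1) th0 \<theta> fd_hess[OF _ \<eta>] fd_hess[OF _ et0] _ \<alpha>])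
      show "\<bar>hess t \<eta> k h - hess t eta0 k h\<bar> \<le> C * norm ?e"
        if "t \<in> HP" "ereal (norm k) + \<rho> h \<le> 1" for t k h
        using hess_lip[OF that(1) that(1) et0 \<eta> that(2)] by simp
    qed
    have quad_term: "\<bar>?G \<theta> eta0 \<alpha> - ?G theta0 eta0 \<alpha> - hess theta0 eta0 ?d \<alpha>\<bar>
        \<le> Iquad * (4 * M * C * (norm ?d)\<^sup>2)"
    proof (cases "\<forall>t. risk P0 loss t eta0 - risk P0 loss theta0 eta0
                    = ?G theta0 eta0 (t - theta0) + 1/2 * hess theta0 eta0 (t - theta0) (t - theta0)")
      case True
      have "?G \<theta> eta0 \<alpha> = ?G theta0 eta0 \<alpha> + hess theta0 eta0 ?d \<alpha>"
      proof -
        have l: "linear (?G theta0 eta0)" using foc by (simp add: linear_zero)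
        have B: "bilinear (hess theta0 eta0)" using frechet_dual_bilinear[OF fd_hess[OF th0 et0]] .
        have sym: "hess theta0 eta0 h k = hess theta0 eta0 k h" for h k using A3_ii th0 et0 by blast
        have "((\<lambda>t. risk P0 loss t eta0) has_derivative ?G \<theta> eta0) (at \<theta>)"
          using A3_i_deriv \<theta> et0 P0_in by blast
        from quadratic_directional_derivative[where l = "?G theta0 eta0", OF True[rule_format] l B sym this]
        show ?thesis .
      qed
      moreover have "Iquad = 0" using True unfolding Iquad_def theta0_def eta0_def by simp
      ultimately show ?thesis by simp
    next
      case False
      then have "Iquad = 1" unfolding Iquad_def theta0_def eta0_def by simp
      moreover have "\<bar>?G \<theta> eta0 \<alpha> - ?G theta0 eta0 \<alpha> - hess theta0 eta0 ?d \<alpha>\<bar>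
          \<le> 4 * M * C * (norm ?d)\<^sup>2"
        using frechet_dual_taylor_bound[OF rho_norm cvx(1) th0 \<theta> fd_hess[OF _ et0] _ C(1) \<alpha>]
          hess_lip[OF th0 _ et0 et0] by simp
      ultimately show ?thesis by simp
    qed
    have nuisance_term: "\<bar>?G theta0 \<eta> \<alpha> - ?G theta0 eta0 \<alpha>\<bar> \<le> 4 * M * C * (norm ?e)\<^sup>2"
      using frechet_dual_taylor_bound[OF rho_norm cvx(2) et0 \<eta> A4_i[rule_format] cross_lip C(1) \<alpha>] A5
      by simp
    have "\<bar>psi P0 m \<theta> - psi P0 m theta0 - ?G \<theta> \<eta> \<alpha> - Bbar (alpha0 - \<iota> \<alpha>) (\<iota> ?d)\<bar>
        \<le> Ilin * C * (norm ?d)\<^sup>2 + 4 * M * C * (norm ?e * norm ?d)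
          + Iquad * (4 * M * C * (norm ?d)\<^sup>2) + 4 * M * C * (norm ?e)\<^sup>2"
      using riesz lin_term mixed_term quad_term nuisance_term fun_cong[OF foc, of \<alpha>]
      by (simp add: algebra_simps)
    also have "\<dots> \<le> K * ((Ilin + Iquad) * (norm ?d)\<^sup>2 + norm ?e * norm ?d + (norm ?e)\<^sup>2)"
    proof -
      have I: "0 \<le> Ilin" "0 \<le> Iquad" unfolding Ilin_def Iquad_def by auto
      have K: "C \<le> K" "4 * M * C \<le> K" unfolding K_def using C(1) \<open>M > 0\<close> by (simp_all add: distrib_right)
      have "Ilin * C * (norm ?d)\<^sup>2 \<le> Ilin * K * (norm ?d)\<^sup>2"
        using I K by (intro mult_right_mono mult_left_mono) auto
      moreover have "Iquad * (4 * M * C * (norm ?d)\<^sup>2) \<le> Iquad * (K * (norm ?d)\<^sup>2)"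
        using I K by (intro mult_right_mono mult_left_mono) auto
      moreover have "4 * M * C * (norm ?e * norm ?d) \<le> K * (norm ?e * norm ?d)"
        using K by (intro mult_right_mono) auto
      moreover have "4 * M * C * (norm ?e)\<^sup>2 \<le> K * (norm ?e)\<^sup>2"
        using K by (intro mult_right_mono) auto
      ultimately show ?thesis by (simp add: algebra_simps)
    qed
    finally show "\<bar>psi P0 m \<theta> - psi P0 m theta0 - ?G \<theta> \<eta> \<alpha> - Bbar (alpha0 - \<iota> \<alpha>) (\<iota> ?d)\<bar>
        \<le> K * ((Ilin + Iquad) * (norm ?d)\<^sup>2 + norm ?e * norm ?d + (norm ?e)\<^sup>2)" .
  qed
qed

end
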